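(* For every ${\bf F}(z)=\sum_{c=1}^sF_c(z)\otimes e_c\in\hat\Lambda^{(s)}\otimes V$ and every $N\in{\mathbb N}$, $$E_N\big((\bar\pi_{N-1}\otimes1){\bf F}(z)\big)=\bar\pi_N\big(\mathcal S({\bf F}(z))\big)$$ as elements of $\Lambda^{s,N}_+$.
   Context: Fix $s\ge1$. Let $\hat\Lambda^{(s)}={\mathbb C}[p_{a,k}: a=1,\dots,s,\ k=0,1,2,\dots]$, $e_1,\dots,e_s$ the standard basis of ${\mathbb C}^s$, $V={\mathbb C}[z]\otimes{\mathbb C}^s$. For $c=1,\dots,s$, $\Phi_c(z)$ is the substitution $p_{c,k}\mapsto p_{c,k}+z^k$ ($k\ge0$) and $\Phi_c^{-1}(z)$ the substitution $p_{c,k}\mapsto p_{c,k}-z^k$ ($k\ge0$), other variables unchanged; $\varphi^-_c(z)=\sum_{k\ge0}p_{c,k}z^{-k}$ (multiplication operator). $\langle0|_+$ is the constant-term functional on $\hat\Lambda^{(s)}$. Define $\bar\pi_N(|v\rangle_+)=\sum_{c_1,\dots,c_N}\langle0|_+\Phi_{c_N}(x_N)\cdots\Phi_{c_1}(x_1)|v\rangle_+\,e_{c_1}\otimes\cdots\otimes e_{c_N}\in{\mathbb C}[x_1,\dots,x_N]\otimes({\mathbb C}^s)^{\otimes N}$ (the $i$-th factor carries $x_i$). $\Lambda^{s,N}_+$ is the space of such tensors invariant under all $\sigma_{ij}=K_{ij}P_{ij}$ ($K_{ij}$ swaps $x_i,x_j$; $P_{ij}$ swaps tensor factors $i,j$).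 $(\bar\pi_{N-1}\otimes1){\bf F}(z)$ denotes $\sum_{c_1,\dots,c_N}\langle0|_+\Phi_{c_N}(x_N)\cdots\Phi_{c_2}(x_2)F_{c_1}(x_1)\,e_{c_1}\otimes\cdots\otimes e_{c_N}$, which is invariant under $\sigma_{ij}$ for $i,j\ge2$. For such a tensor $u$, $E_N(u)=\sum_{j=1}^N\sigma_{1j}(u)$ with $\sigma_{11}=\mathrm{id}$. Finally $\mathcal S({\bf F}(z))\in\hat\Lambda^{(s)}$ is the coefficient of $z^0$ of the Laurent series $\sum_{c=1}^s\varphi^-_c(z)\,\Phi_c^{-1}(z)F_c(z)$ (here $\Phi_c^{-1}(z)$ acts on the $\hat\Lambda^{(s)}$-coefficients of $F_c(z)$). *)

theory Defs
  imports Complex_Main "HOL-Library.Poly_Mapping"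
begin

text \<open>Variables: P a k stands for p_{a,k}; Z for the formal variable z; X i for x_i.\<close>
datatype var = P nat nat | Z | X nat

type_synonym pol = "(var \<Rightarrow>\<^sub>0 nat) \<Rightarrow>\<^sub>0 complex"

definition cst :: "complex \<Rightarrow> pol" where
  "cst a = Poly_Mapping.single 0 a"

definition Var :: "var \<Rightarrow> pol" where
  "Var v = Poly_Mapping.single (Poly_Mapping.single v 1) 1"

definition subst :: "(var \<Rightarrow> pol) \<Rightarrow> pol \<Rightarrow> pol" where
  "subst \<sigma> f = (\<Sum>m\<in>Poly_Mapping.keys f.
     cst (Poly_Mapping.lookup f m) *
     (\<Prod>v\<in>Poly_Mapping.keys (m :: var \<Rightarrow>\<^sub>0 nat). \<sigma> v ^ Poly_Mapping.lookup m v))"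

definition vars :: "pol \<Rightarrow> var set" where
  "vars f = (\<Union>m\<in>Poly_Mapping.keys f. Poly_Mapping.keys m)"

definition Phi :: "nat \<Rightarrow> pol \<Rightarrow> pol \<Rightarrow> pol" where
  "Phi c w = subst (\<lambda>v. case v of
      P a k \<Rightarrow> (if a = c then Var (P a k) + w ^ k else Var (P a k))
    | _ \<Rightarrow> Var v)"

definition Phi_inv :: "nat \<Rightarrow> pol \<Rightarrow> pol \<Rightarrow> pol" where
  "Phi_inv c w = subst (\<lambda>v. case v of
      P a k \<Rightarrow> (if a = c then Var (P a k) - w ^ k else Var (P a k))
    | _ \<Rightarrow> Var v)"

text \<open>The constant-term functional <0|_+ in the p-variables (extended linearly over the
  remaining variables).\<close>
definition vac :: "pol \<Rightarrow> pol" where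
  "vac = subst (\<lambda>v. case v of P a k \<Rightarrow> 0 | _ \<Rightarrow> Var v)"

text \<open>Tensors in C[x_1..x_N] (x) (C^s)^{(x)N} are represented by their coefficient
  functions: c (with c i in {1..s} for i = 1..N) gives the coefficient of
  e_{c 1} (x) ... (x) e_{c N}.\<close>

definition pibar :: "nat \<Rightarrow> pol \<Rightarrow> (nat \<Rightarrow> nat) \<Rightarrow> pol" where
  "pibar N v c = vac (fold (\<lambda>i. Phi (c i) (Var (X i))) [1..<Suc N] v)"

text \<open>(pibar_{N-1} (x) 1) F(z): coefficient at c is
  <0| Phi_{c_N}(x_N) ... Phi_{c_2}(x_2) F_{c_1}(x_1).\<close>
definition pibar_F :: "nat \<Rightarrow> (nat \<Rightarrow> pol) \<Rightarrow> (nat \<Rightarrow> nat) \<Rightarrow> pol" where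
  "pibar_F N F c = vac (fold (\<lambda>i. Phi (c i) (Var (X i))) [2..<Suc N]
       (subst (\<lambda>v. if v = Z then Var (X 1) else Var v) (F (c 1))))"

definition swapX :: "nat \<Rightarrow> nat \<Rightarrow> pol \<Rightarrow> pol" where
  "swapX i j = subst (\<lambda>v. case v of
      X k \<Rightarrow> Var (X (if k = i then j else if k = j then i else k))
    | _ \<Rightarrow> Var v)"

text \<open>sigma_{ij} = K_{ij} P_{ij} acting on coefficient functions.\<close>
definition sigma :: "nat \<Rightarrow> nat \<Rightarrow> ((nat \<Rightarrow> nat) \<Rightarrow> pol) \<Rightarrow> (nat \<Rightarrow> nat) \<Rightarrow> pol" where
  "sigma i j u c = swapX i j (u (c(i := c j, j := c i)))"

definition EN :: "nat \<Rightarrow> ((nat \<Rightarrow> nat) \<Rightarrow> pol) \<Rightarrow> (nat \<Rightarrow> nat) \<Rightarrow> pol" where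
  "EN N u c = (\<Sum>j=1..N. sigma 1 j u c)"

definition coeffZ :: "nat \<Rightarrow> pol \<Rightarrow> pol" where
  "coeffZ k g = (\<Sum>m\<in>{m\<in>Poly_Mapping.keys g. Poly_Mapping.lookup m Z = k}.
       Poly_Mapping.single (m - Poly_Mapping.single Z k) (Poly_Mapping.lookup g m))"

text \<open>S(F): coefficient of z^0 in sum_c phi^-_c(z) Phi_c^{-1}(z) F_c(z), where
  phi^-_c(z) = sum_k p_{c,k} z^{-k}; for G polynomial in z this coefficient is
  sum_k p_{c,k} [z^k] G (a finite sum over the z-degrees occurring in G).\<close>
definition S :: "nat \<Rightarrow> (nat \<Rightarrow> pol) \<Rightarrow> pol" where
  "S s F = (\<Sum>c=1..s. let G = Phi_inv c (Var Z) (F c) in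
       (\<Sum>k\<in>(\<lambda>m. Poly_Mapping.lookup m Z) ` Poly_Mapping.keys G. Var (P c k) * coeffZ k G))"

end

theory Submission
  imports Defs "HOL-Combinatorics.Permutations"
begin

text \<open>Applying the shifts Phi_{c_i}(x_i) and then the vacuum functional is the same as
  specializing every p_{a,k} to the coloured power sum of the x_i^k with c_i = a. Under this
  specialization the pairing sum_k p_{a,k} [z^k] G becomes the sum of G(x_j) over the j with
  c_j = a, so pibar_N(S(F)) is the sum over j of F_{c_j}(x_j), where the inverse shift
  Phi_{c_j}^{-1}(x_j) removes the j-th summand from every power sum. The term sigma_{1j} of E_N is
  the same expression, because the transposition of 1 and j turns the shifts over the indices
  2..N into shifts over the indices different from j.\<close>

section \<open>Substitution is a ring homomorphism\<close>

lemma poly_mapping_sum_single: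
  "f = (\<Sum>m\<in>Poly_Mapping.keys f. Poly_Mapping.single m (Poly_Mapping.lookup f m))"
  by (rule poly_mapping_eqI) (auto simp: lookup_sum lookup_single when_def in_keys_iff)

definition monom_subst :: "(var \<Rightarrow> pol) \<Rightarrow> (var \<Rightarrow>\<^sub>0 nat) \<Rightarrow> pol" where
  "monom_subst \<sigma> m = (\<Prod>v\<in>Poly_Mapping.keys m. \<sigma> v ^ Poly_Mapping.lookup m v)"

lemma monom_subst_superset:
  "finite A \<Longrightarrow> Poly_Mapping.keys m \<subseteq> A \<Longrightarrow>
   monom_subst \<sigma> m = (\<Prod>v\<in>A. \<sigma> v ^ Poly_Mapping.lookup m v)"
  unfolding monom_subst_def by (rule prod.mono_neutral_left) (auto simp: in_keys_iff)

lemma monom_subst_add: "monom_subst \<sigma> (m + n) = monom_subst \<sigma> m * monom_subst \<sigma> n"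
proof -
  let ?A = "Poly_Mapping.keys m \<union> Poly_Mapping.keys n"
  have "monom_subst \<sigma> (m + n) = (\<Prod>v\<in>?A. \<sigma> v ^ Poly_Mapping.lookup (m + n) v)"
    by (rule monom_subst_superset) (auto dest: keys_add[THEN subsetD])
  also have "\<dots> = (\<Prod>v\<in>?A. \<sigma> v ^ Poly_Mapping.lookup m v) * (\<Prod>v\<in>?A. \<sigma> v ^ Poly_Mapping.lookup n v)"
    by (simp add: lookup_add power_add prod.distrib)
  also have "\<dots> = monom_subst \<sigma> m * monom_subst \<sigma> n"
    using monom_subst_superset[of ?A m \<sigma>] monom_subst_superset[of ?A n \<sigma>] by simp
  finally show ?thesis .
qed

lemma cst_add: "cst (a + b) = cst a + cst b"
  by (simp add: cst_def single_add)

lemma cst_mult: "cst (a * b) = cst a * cst b"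
  by (simp add: cst_def mult_single)

lemma cst_1 [simp]: "cst 1 = 1"
  by (simp add: cst_def)

lemma subst_eq_monom_subst:
  "subst \<sigma> f = (\<Sum>m\<in>Poly_Mapping.keys f. cst (Poly_Mapping.lookup f m) * monom_subst \<sigma> m)"
  by (simp add: subst_def monom_subst_def)

lemma subst_superset:
  "finite A \<Longrightarrow> Poly_Mapping.keys f \<subseteq> A \<Longrightarrow>
   subst \<sigma> f = (\<Sum>m\<in>A. cst (Poly_Mapping.lookup f m) * monom_subst \<sigma> m)"
  unfolding subst_eq_monom_subst
  by (rule sum.mono_neutral_left) (auto simp: in_keys_iff cst_def)

lemma subst_add: "subst \<sigma> (f + g) = subst \<sigma> f + subst \<sigma> g"
proof -
  let ?A = "Poly_Mapping.keys f \<union> Poly_Mapping.keys g"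
  have "subst \<sigma> (f + g) = (\<Sum>m\<in>?A. cst (Poly_Mapping.lookup (f + g) m) * monom_subst \<sigma> m)"
    by (rule subst_superset) (auto dest: keys_add[THEN subsetD])
  also have "\<dots> = (\<Sum>m\<in>?A. cst (Poly_Mapping.lookup f m) * monom_subst \<sigma> m)
                 + (\<Sum>m\<in>?A. cst (Poly_Mapping.lookup g m) * monom_subst \<sigma> m)"
    by (simp add: lookup_add cst_add distrib_right sum.distrib)
  also have "\<dots> = subst \<sigma> f + subst \<sigma> g"
    using subst_superset[of ?A f \<sigma>] subst_superset[of ?A g \<sigma>] by simp
  finally show ?thesis .
qed

lemma subst_0 [simp]: "subst \<sigma> 0 = 0"
  by (simp add: subst_def)

lemma subst_sum: "subst \<sigma> (sum g A) = (\<Sum>a\<in>A. subst \<sigma> (g a))"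
  by (induction A rule: infinite_finite_induct) (auto simp: subst_add)

lemma subst_single: "subst \<sigma> (Poly_Mapping.single m a) = cst a * monom_subst \<sigma> m"
  by (subst subst_superset[where A = "{m}"]) auto

lemma subst_mult: "subst \<sigma> (f * g) = subst \<sigma> f * subst \<sigma> g"
proof -
  have "f * g = (\<Sum>m\<in>Poly_Mapping.keys f. \<Sum>n\<in>Poly_Mapping.keys g.
      Poly_Mapping.single (m + n) (Poly_Mapping.lookup f m * Poly_Mapping.lookup g n))"
    by (subst poly_mapping_sum_single[of f], subst poly_mapping_sum_single[of g])
       (simp add: sum_product mult_single)
  then have "subst \<sigma> (f * g) = (\<Sum>m\<in>Poly_Mapping.keys f. \<Sum>n\<in>Poly_Mapping.keys g.
      cst (Poly_Mapping.lookup f m) * monom_subst \<sigma> m * (cst (Poly_Mapping.lookup g n) * monom_subst \<sigma> n))"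
    by (simp add: subst_sum subst_single cst_mult monom_subst_add mult_ac)
  also have "\<dots> = subst \<sigma> f * subst \<sigma> g"
    by (simp add: subst_eq_monom_subst sum_product)
  finally show ?thesis .
qed

lemma subst_cst [simp]: "subst \<sigma> (cst a) = cst a"
  by (simp add: cst_def subst_single monom_subst_def)

lemma subst_Var [simp]: "subst \<sigma> (Var v) = \<sigma> v"
  by (simp add: Var_def subst_single monom_subst_def)

lemma subst_power: "subst \<sigma> (f ^ n) = subst \<sigma> f ^ n"
  by (induction n) (auto simp: subst_mult simp flip: cst_1)

lemma subst_prod: "subst \<sigma> (prod g A) = (\<Prod>a\<in>A. subst \<sigma> (g a))"
  by (induction A rule: infinite_finite_induct) (auto simp: subst_mult simp flip: cst_1)

lemma subst_diff: "subst \<sigma> (f - g) = subst \<sigma> f - subst \<sigma> g"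
  using subst_add[of \<sigma> "f - g" g] by simp

lemma subst_subst: "subst \<sigma> (subst \<tau> f) = subst (\<lambda>v. subst \<sigma> (\<tau> v)) f"
  by (simp only: subst_def[of \<tau> f] subst_def[of "\<lambda>v. subst \<sigma> (\<tau> v)" f]
      subst_sum subst_mult subst_prod subst_power subst_cst)

lemma subst_cong: "(\<And>v. v \<in> vars f \<Longrightarrow> \<sigma> v = \<tau> v) \<Longrightarrow> subst \<sigma> f = subst \<tau> f"
  unfolding subst_def vars_def
  by (intro sum.cong refl arg_cong2[where f = "(*)"] prod.cong) (auto; metis)

lemma Var_power: "Var v ^ n = Poly_Mapping.single (Poly_Mapping.single v n) 1"
  by (induction n) (auto simp: Var_def mult_single simp flip: single_add)

lemma monom_subst_Var: "monom_subst Var m = Poly_Mapping.single m 1"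
proof -
  have prod_single: "(\<Prod>v\<in>A. Poly_Mapping.single (g v) (1::complex)) = Poly_Mapping.single (sum g A) 1"
    for A and g :: "var \<Rightarrow> var \<Rightarrow>\<^sub>0 nat"
    by (induction A rule: infinite_finite_induct) (auto simp: mult_single)
  have "monom_subst Var m = Poly_Mapping.single
      (\<Sum>v\<in>Poly_Mapping.keys m. Poly_Mapping.single v (Poly_Mapping.lookup m v)) 1"
    by (simp add: monom_subst_def Var_power prod_single)
  then show ?thesis by (simp flip: poly_mapping_sum_single)
qed

lemma subst_Var_ident [simp]: "subst Var f = f"
  by (subst (2) poly_mapping_sum_single)
     (simp add: subst_eq_monom_subst monom_subst_Var cst_def mult_single)

section \<open>Extracting the coefficients of \<open>z\<^sup>k\<close>\<close>

lemma vars_sum: "vars (sum g A) \<subseteq> (\<Union>a\<in>A. vars (g a))"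
  unfolding vars_def using keys_sum[of g A] by blast

lemma Z_notin_vars_coeffZ: "Z \<notin> vars (coeffZ k g)"
proof
  assume "Z \<in> vars (coeffZ k g)"
  then obtain m where "Poly_Mapping.lookup m Z = k"
      "Z \<in> vars (Poly_Mapping.single (m - Poly_Mapping.single Z k) (Poly_Mapping.lookup g m))"
    unfolding coeffZ_def using vars_sum by blast
  then show False
    by (auto simp: vars_def in_keys_iff lookup_minus split: if_splits)
qed

lemma sum_Z_power_coeffZ:
  "(\<Sum>k\<in>(\<lambda>m. Poly_Mapping.lookup m Z) ` Poly_Mapping.keys g. Var Z ^ k * coeffZ k g) = g"
proof -
  have split_Z: "Poly_Mapping.single Z k + (m - Poly_Mapping.single Z k) = m"
    if "Poly_Mapping.lookup m Z = k" for m k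
    by (rule poly_mapping_eqI) (use that in \<open>auto simp: lookup_add lookup_minus lookup_single when_def\<close>)
  have "(\<Sum>k\<in>(\<lambda>m. Poly_Mapping.lookup m Z) ` Poly_Mapping.keys g. Var Z ^ k * coeffZ k g)
     = (\<Sum>k\<in>(\<lambda>m. Poly_Mapping.lookup m Z) ` Poly_Mapping.keys g.
          \<Sum>m\<in>{m\<in>Poly_Mapping.keys g. Poly_Mapping.lookup m Z = k}.
            Poly_Mapping.single m (Poly_Mapping.lookup g m))"
    unfolding coeffZ_def Var_power sum_distrib_left
    by (intro sum.cong refl) (auto simp: mult_single split_Z)
  also have "\<dots> = g"
    by (simp flip: sum.image_gen poly_mapping_sum_single)
  finally show ?thesis .
qed

lemma subst_pairing_coeffZ:
  assumes "finite J" and "\<And>k. \<rho> (P a k) = (\<Sum>j\<in>J. w j ^ k)"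
  shows "subst \<rho> (\<Sum>k\<in>(\<lambda>m. Poly_Mapping.lookup m Z) ` Poly_Mapping.keys g. Var (P a k) * coeffZ k g)
     = (\<Sum>j\<in>J. subst (\<rho>(Z := w j)) g)"
proof -
  let ?K = "(\<lambda>m. Poly_Mapping.lookup m Z) ` Poly_Mapping.keys g"
  have coeffZ_indep: "subst \<rho> (coeffZ k g) = subst (\<rho>(Z := w j)) (coeffZ k g)" for k j
    by (rule subst_cong) (use Z_notin_vars_coeffZ in auto)
  have "subst \<rho> (\<Sum>k\<in>?K. Var (P a k) * coeffZ k g)
      = (\<Sum>k\<in>?K. \<Sum>j\<in>J. w j ^ k * subst \<rho> (coeffZ k g))"
    by (simp add: subst_sum subst_mult assms(2) sum_distrib_right)
  also have "\<dots> = (\<Sum>j\<in>J. subst (\<rho>(Z := w j)) (\<Sum>k\<in>?K. Var Z ^ k * coeffZ k g))"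
    by (subst sum.swap) (simp add: subst_sum subst_mult subst_power coeffZ_indep[symmetric])
  also have "\<dots> = (\<Sum>j\<in>J. subst (\<rho>(Z := w j)) g)"
    by (simp only: sum_Z_power_coeffZ)
  finally show ?thesis .
qed

section \<open>Shifts and the vacuum functional as specializations to power sums\<close>

definition power_sum :: "(nat \<Rightarrow> nat) \<Rightarrow> nat set \<Rightarrow> nat \<Rightarrow> nat \<Rightarrow> pol" where
  "power_sum c A a k = (\<Sum>i\<in>A. if c i = a then Var (X i) ^ k else 0)"

definition shift_P :: "(nat \<Rightarrow> nat) \<Rightarrow> nat set \<Rightarrow> var \<Rightarrow> pol" where
  "shift_P c A v = (case v of P a k \<Rightarrow> Var (P a k) + power_sum c A a k | _ \<Rightarrow> Var v)"

definition eval_P :: "(nat \<Rightarrow> nat) \<Rightarrow> nat set \<Rightarrow> var \<Rightarrow> pol" where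
  "eval_P c A v = (case v of P a k \<Rightarrow> power_sum c A a k | _ \<Rightarrow> Var v)"

lemma subst_power_sum:
  "subst \<sigma> (power_sum c A a k) = (\<Sum>i\<in>A. if c i = a then \<sigma> (X i) ^ k else 0)"
  unfolding power_sum_def subst_sum by (intro sum.cong refl) (simp add: subst_power)

lemma subst_power_sum_fixing_X:
  "(\<And>i. \<sigma> (X i) = Var (X i)) \<Longrightarrow> subst \<sigma> (power_sum c A a k) = power_sum c A a k"
  unfolding subst_power_sum by (simp add: power_sum_def cong: if_cong)

lemma fold_Phi_eq_subst:
  "distinct xs \<Longrightarrow> fold (\<lambda>i. Phi (c i) (Var (X i))) xs f = subst (shift_P c (set xs)) f"
proof (induction xs arbitrary: f)
  case Nil
  have "shift_P c {} = Var"
    by (rule ext) (simp add: shift_P_def power_sum_def split: var.split)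
  then show ?case by simp
next
  case (Cons x xs)
  have "fold (\<lambda>i. Phi (c i) (Var (X i))) (x # xs) f
      = subst (shift_P c (set xs)) (Phi (c x) (Var (X x)) f)"
    using Cons by simp
  also have "\<dots> = subst (shift_P c (set (x # xs))) f"
    unfolding Phi_def subst_subst
    by (intro arg_cong[where f = "\<lambda>\<sigma>. subst \<sigma> f"] ext)
       (use Cons.prems in \<open>auto simp: shift_P_def power_sum_def subst_add subst_power split: var.split\<close>)
  finally show ?case .
qed

lemma vac_fold_Phi_eq_subst:
  "distinct xs \<Longrightarrow> vac (fold (\<lambda>i. Phi (c i) (Var (X i))) xs f) = subst (eval_P c (set xs)) f"
  unfolding fold_Phi_eq_subst vac_def subst_subst
  by (intro arg_cong[where f = "\<lambda>\<sigma>. subst \<sigma> f"] ext)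
     (auto simp: shift_P_def eval_P_def subst_add subst_power_sum_fixing_X split: var.split)

lemma pibar_eq_subst: "pibar N f c = subst (eval_P c {1..N}) f"
  unfolding pibar_def vac_fold_Phi_eq_subst[OF distinct_upt] set_upt atLeastLessThanSuc_atLeastAtMost ..

lemma pibar_F_eq_subst:
  "pibar_F N F c = subst (\<lambda>v. if v = Z then Var (X 1) else eval_P c {2..N} v) (F (c 1))"
  unfolding pibar_F_def vac_fold_Phi_eq_subst[OF distinct_upt] set_upt atLeastLessThanSuc_atLeastAtMost
    subst_subst
  by (auto intro!: arg_cong[where f = "\<lambda>\<sigma>. subst \<sigma> _"] ext simp: eval_P_def split: var.split)

lemma pibar_S_eq_sum:
  assumes "\<forall>i\<in>{1..N}. c i \<in> {1..s}"
  shows "pibar N (S s F) c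
    = (\<Sum>j=1..N. subst ((eval_P c {1..N})(Z := Var (X j))) (Phi_inv (c j) (Var Z) (F (c j))))"
proof -
  let ?\<rho> = "eval_P c {1..N}"
  let ?T = "\<lambda>a j. subst (?\<rho>(Z := Var (X j))) (Phi_inv a (Var Z) (F a))"
  have colour_term: "subst ?\<rho> (let G = Phi_inv a (Var Z) (F a) in
      \<Sum>k\<in>(\<lambda>m. Poly_Mapping.lookup m Z) ` Poly_Mapping.keys G. Var (P a k) * coeffZ k G)
    = (\<Sum>j\<in>{j\<in>{1..N}. c j = a}. ?T a j)" for a
    unfolding Let_def
    by (rule subst_pairing_coeffZ) (simp, subst sum.inter_filter, auto simp: eval_P_def power_sum_def)
  have "pibar N (S s F) c = (\<Sum>a=1..s. \<Sum>j\<in>{j\<in>{1..N}. c j = a}. ?T (c j) j)"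
    unfolding pibar_eq_subst S_def subst_sum colour_term by (intro sum.cong) auto
  also have "\<dots> = (\<Sum>j=1..N. ?T (c j) j)"
    using assms by (intro sum.group) auto
  finally show ?thesis .
qed

lemma swapX_eq_subst_transpose:
  "swapX i j = subst (\<lambda>v. case v of X k \<Rightarrow> Var (X (transpose i j k)) | _ \<Rightarrow> Var v)"
  unfolding swapX_def transpose_def ..

text \<open>Relabelling by the transposition of \<open>1\<close> and \<open>j\<close> sends the indices \<open>2..N\<close>
  onto \<open>{1..N} - {j}\<close>.\<close>

lemma swapX_power_sum_transpose:
  assumes "j \<in> {1..N}"
  shows "swapX 1 j (power_sum (c \<circ> transpose 1 j) {2..N} a k)
    = power_sum c {1..N} a k - (if c j = a then Var (X j) ^ k else 0)"
proof -
  define h where "h i = (if c i = a then Var (X i) ^ k else 0)" for i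
  have "swapX 1 j (power_sum (c \<circ> transpose 1 j) {2..N} a k) = (\<Sum>i\<in>{2..N}. h (transpose 1 j i))"
    by (simp add: swapX_eq_subst_transpose subst_power_sum h_def cong: if_cong)
  also have "\<dots> = (\<Sum>i\<in>{1..N}. h (transpose 1 j i)) - h j"
    using assms sum.atLeast_Suc_atMost[of 1 N "\<lambda>i. h (transpose 1 j i)"]
    by (simp add: numeral_2_eq_2)
  also have "\<dots> = power_sum c {1..N} a k - h j"
    using sum.permute[OF permutes_swap_id[of 1 "{1..N}" j], of h] assms
    by (simp add: power_sum_def h_def comp_def)
  finally show ?thesis by (simp add: h_def)
qed

lemma sigma_pibar_F_eq:
  assumes j: "j \<in> {1..N}" and no_X: "\<forall>i. X i \<notin> vars (F (c j))"
  shows "sigma 1 j (pibar_F N F) c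
    = subst ((eval_P c {1..N})(Z := Var (X j))) (Phi_inv (c j) (Var Z) (F (c j)))"
proof -
  have transposed: "c(1 := c j, j := c 1) = c \<circ> transpose 1 j"
    by (auto simp: transpose_def)
  have "sigma 1 j (pibar_F N F) c
    = subst (\<lambda>v. swapX 1 j (if v = Z then Var (X 1) else eval_P (c \<circ> transpose 1 j) {2..N} v)) (F (c j))"
    unfolding sigma_def pibar_F_eq_subst transposed swapX_def subst_subst by (simp add: transpose_def)
  also have "\<dots> = subst ((eval_P c {1..N})(Z := Var (X j))) (Phi_inv (c j) (Var Z) (F (c j)))"
    unfolding Phi_inv_def subst_subst
  proof (rule subst_cong)
    fix v assume v: "v \<in> vars (F (c j))"
    show "swapX 1 j (if v = Z then Var (X 1) else eval_P (c \<circ> transpose 1 j) {2..N} v)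
      = subst ((eval_P c {1..N})(Z := Var (X j)))
          (case v of P a k \<Rightarrow> if a = c j then Var (P a k) - Var Z ^ k else Var (P a k) | _ \<Rightarrow> Var v)"
    proof (cases v)
      case (P a k)
      then show ?thesis
        using swapX_power_sum_transpose[OF j, of c a k]
        by (simp add: eval_P_def subst_diff subst_power)
    next
      case Z
      then show ?thesis by (simp add: swapX_def)
    next
      case (X i)
      then show ?thesis using v no_X by blast
    qed
  qed
  finally show ?thesis .
qed

theorem lemma3p2:
  fixes s N :: nat and F :: "nat \<Rightarrow> pol" and c :: "nat \<Rightarrow> nat"
  assumes "1 \<le> s" and "1 \<le> N"
    and "\<forall>a\<in>{1..s}. vars (F a) \<subseteq> {Z} \<union> {P b k | b k. b \<in> {1..s}}"
    and "\<forall>i\<in>{1..N}. c i \<in> {1..s}"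
  shows "EN N (pibar_F N F) c = pibar N (S s F) c"
proof -
  have "EN N (pibar_F N F) c
    = (\<Sum>j=1..N. subst ((eval_P c {1..N})(Z := Var (X j))) (Phi_inv (c j) (Var Z) (F (c j))))"
    unfolding EN_def
  proof (rule sum.cong[OF refl])
    fix j assume j: "j \<in> {1..N}"
    then have "\<forall>i. X i \<notin> vars (F (c j))"
      using assms(3,4) by blast
    with j show "sigma 1 j (pibar_F N F) c
      = subst ((eval_P c {1..N})(Z := Var (X j))) (Phi_inv (c j) (Var Z) (F (c j)))"
      by (rule sigma_pibar_F_eq)
  qed
  also have "\<dots> = pibar N (S s F) c"
    using assms(4) by (rule pibar_S_eq_sum[symmetric])
  finally show ?thesis .
qed

end
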